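(* Every instance of 2-SBCM has a solution with at most one block crossing before each meeting (i.e., $|B_i|\le 1$ for all $i$); in particular, it has a solution with at most $n$ block crossings in total, where $n$ is the number of meetings.
   Context: A storyline instance is a pair $(C,M)$ where $C=\{1,\dots,k\}$ is a set of characters and $M=[m_1,\dots,m_n]$ is a sequence of meetings with $m_i\subseteq C$; in 2-SBCM every meeting has exactly two characters. A permutation of $C$ lists each character exactly once. For $1\le a\le b<c\le k$, the block crossing $(a,b,c)$ maps $\langle \pi_1,\dots,\pi_k\rangle$ to $\langle \pi_1,\dots,\pi_{a-1},\pi_{b+1},\dots,\pi_c,\pi_a,\dots,\pi_b,\pi_{c+1},\dots,\pi_k\rangle$. A meeting fits (is supported by) a permutation if its characters occupy consecutive positions. A solution is a start permutation $\pi^0$ and sequences $B_1,\dots,B_n$ of block crossings (possibly empty) such that, with $\pi^i$ obtained by applying $B_i$ in order to $\pi^{i-1}$, $\pi^i$ supports $m_i$ for all $i$. *)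

theory Defs
  imports Main
begin

(* Characters are 1..k; a permutation of C = {1..k} is a list listing each character once.
   Positions are 1-based as in the paper. *)
definition is_perm :: "nat \<Rightarrow> nat list \<Rightarrow> bool" where
  "is_perm k \<pi> \<longleftrightarrow> distinct \<pi> \<and> set \<pi> = {1..k}"

(* block crossing (a,b,c): positions a..b and b+1..c are exchanged *)
definition valid_bc :: "nat \<Rightarrow> nat \<times> nat \<times> nat \<Rightarrow> bool" where
  "valid_bc k t \<longleftrightarrow> (case t of (a, b, c) \<Rightarrow> 1 \<le> a \<and> a \<le> b \<and> b < c \<and> c \<le> k)"

definition apply_bc :: "nat \<times> nat \<times> nat \<Rightarrow> nat list \<Rightarrow> nat list" where
  "apply_bc t \<pi> = (case t of (a, b, c) \<Rightarrow>
     take (a - 1) \<pi> @ drop b (take c \<pi>) @ drop (a - 1) (take b \<pi>) @ drop c \<pi>)"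

definition apply_bcs :: "(nat \<times> nat \<times> nat) list \<Rightarrow> nat list \<Rightarrow> nat list" where
  "apply_bcs B \<pi> = fold apply_bc B \<pi>"

definition supports :: "nat list \<Rightarrow> nat set \<Rightarrow> bool" where
  "supports \<pi> m \<longleftrightarrow> (\<exists>i j. i < length \<pi> \<and> j < length \<pi> \<and> i \<le> j \<and>
       m = set (drop i (take (Suc j) \<pi>)))"

definition sbcm2_instance :: "nat \<Rightarrow> nat set list \<Rightarrow> bool" where
  "sbcm2_instance k M \<longleftrightarrow> (\<forall>m \<in> set M. m \<subseteq> {1..k} \<and> card m = 2)"

definition perm_after :: "nat list \<Rightarrow> (nat \<times> nat \<times> nat) list list \<Rightarrow> nat \<Rightarrow> nat list" where
  "perm_after \<pi>0 Bs i = fold apply_bcs (take i Bs) \<pi>0"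

definition is_solution ::
  "nat \<Rightarrow> nat set list \<Rightarrow> nat list \<Rightarrow> (nat \<times> nat \<times> nat) list list \<Rightarrow> bool" where
  "is_solution k M \<pi>0 Bs \<longleftrightarrow>
     is_perm k \<pi>0 \<and> length Bs = length M \<and>
     (\<forall>B \<in> set Bs. \<forall>t \<in> set B. valid_bc k t) \<and>
     (\<forall>i < length M. supports (perm_after \<pi>0 Bs (Suc i)) (M ! i))"

end

theory Submission
  imports Defs
begin

text \<open>Greedy strategy: keep the current permutation and, before each meeting {x, y} with x left of
  y, use the single block crossing that swaps the block strictly between x and y with the
  one-element block [y]. This makes x and y adjacent, so the meeting is supported after at most
  one block crossing, and induction over the meetings gives the solution.\<close>

lemma apply_bc_swap_blocks:
  "apply_bc (Suc (length u), length u + length v, length u + length v + length w) (u @ v @ w @ z)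
     = u @ w @ v @ z"
  unfolding apply_bc_def by simp

lemma supports_adjacent: "supports (u @ x # y # w) {x, y}"
  unfolding supports_def
  by (rule exI[of _ "length u"], rule exI[of _ "Suc (length u)"]) auto

lemma length_if_is_perm: "is_perm k \<pi> \<Longrightarrow> length \<pi> = k"
  unfolding is_perm_def by (metis card_atLeastAtMost diff_Suc_1 distinct_card)

lemma make_adjacent_one_bc:
  assumes "is_perm k (u @ x # v @ y # w)"
  shows "\<exists>B. length B \<le> 1 \<and> (\<forall>t\<in>set B. valid_bc k t)
     \<and> is_perm k (apply_bcs B (u @ x # v @ y # w))
     \<and> supports (apply_bcs B (u @ x # v @ y # w)) {x, y}"
proof (cases "v = []")
  case True
  then show ?thesis
    using supports_adjacent[of u x y w] assms by (intro exI[of _ "[]"]) (simp add: apply_bcs_def)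
next
  case False
  define t where "t = (Suc (length (u @ [x])), length (u @ [x]) + length v,
                       length (u @ [x]) + length v + length [y])"
  have "length (u @ x # v @ y # w) = k"
    using length_if_is_perm[OF assms] .
  then have "valid_bc k t"
    using False unfolding t_def valid_bc_def by (cases v) auto
  moreover have swapped: "apply_bcs [t] (u @ x # v @ y # w) = u @ x # y # v @ w"
    using apply_bc_swap_blocks[of "u @ [x]" v "[y]" w] unfolding t_def apply_bcs_def by simp
  moreover have "is_perm k (u @ x # y # v @ w)"
    using assms unfolding is_perm_def by auto
  ultimately show ?thesis
    using supports_adjacent[of u x y "v @ w"] by (intro exI[of _ "[t]"]) simp
qed

lemma support_meeting_one_bc:
  assumes "is_perm k \<pi>" "m \<subseteq> {1..k}" "card m = 2"
  shows "\<exists>B. length B \<le> 1 \<and> (\<forall>t\<in>set B. valid_bc k t)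
     \<and> is_perm k (apply_bcs B \<pi>) \<and> supports (apply_bcs B \<pi>) m"
proof -
  obtain x y where m: "m = {x, y}" "x \<noteq> y"
    using assms(3) by (meson card_2_iff)
  have "x \<in> set \<pi>" "y \<in> set \<pi>"
    using assms(1,2) m unfolding is_perm_def by auto
  then obtain u r where \<pi>: "\<pi> = u @ x # r" "y \<in> set u \<or> y \<in> set r"
    using m(2) by (metis split_list Un_iff empty_iff insert_iff set_append set_simps(2))
  from \<pi>(2) show ?thesis
  proof
    assume "y \<in> set u"
    then obtain v w where "\<pi> = v @ y # w @ x # r"
      using \<pi>(1) split_list by fastforce
    then show ?thesis
      using make_adjacent_one_bc[of k v y w x r] assms(1) m(1) by (simp add: insert_commute)
  next
    assume "y \<in> set r"
    then obtain v w where "\<pi> = u @ x # v @ y # w"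
      using \<pi>(1) split_list by fastforce
    then show ?thesis
      using make_adjacent_one_bc[of k u x v y w] assms(1) m(1) by simp
  qed
qed

lemma perm_after_Cons_Suc: "perm_after \<pi> (B # Bs) (Suc i) = perm_after (apply_bcs B \<pi>) Bs i"
  unfolding perm_after_def by simp

lemma solution_one_bc_per_meeting:
  assumes "sbcm2_instance k M" "is_perm k \<pi>"
  shows "\<exists>Bs. is_solution k M \<pi> Bs \<and> (\<forall>B \<in> set Bs. length B \<le> 1)"
  using assms
proof (induction M arbitrary: \<pi>)
  case Nil
  then show ?case
    unfolding is_solution_def by simp
next
  case (Cons m M)
  have m: "m \<subseteq> {1..k}" "card m = 2" and M: "sbcm2_instance k M"
    using Cons.prems(1) unfolding sbcm2_instance_def by auto
  obtain B where B: "length B \<le> 1" "\<forall>t\<in>set B. valid_bc k t"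
      "is_perm k (apply_bcs B \<pi>)" "supports (apply_bcs B \<pi>) m"
    using support_meeting_one_bc[OF Cons.prems(2) m] by blast
  obtain Bs where Bs: "is_solution k M (apply_bcs B \<pi>) Bs" "\<forall>B \<in> set Bs. length B \<le> 1"
    using Cons.IH[OF M B(3)] by blast
  have "supports (perm_after \<pi> (B # Bs) (Suc i)) ((m # M) ! i)" if "i < length (m # M)" for i
    using that B(4) Bs(1) unfolding is_solution_def perm_after_Cons_Suc
    by (cases i) (auto simp: perm_after_def)
  then have "is_solution k (m # M) \<pi> (B # Bs)"
    using Cons.prems(2) B(2) Bs(1) unfolding is_solution_def by auto
  then show ?case
    using B(1) Bs(2) by (intro exI[of _ "B # Bs"]) simp
qed

lemma sum_list_length_le_length:
  "\<forall>B \<in> set Bs. length B \<le> 1 \<Longrightarrow> (\<Sum>B\<leftarrow>Bs. length B) \<le> length Bs"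
  by (induction Bs) auto

theorem mainTheorem13:
  fixes k :: nat and M :: "nat set list"
  assumes "sbcm2_instance k M"
  shows "\<exists>\<pi>0 Bs. is_solution k M \<pi>0 Bs \<and> (\<forall>i < length M. length (Bs ! i) \<le> 1)
           \<and> (\<Sum>B\<leftarrow>Bs. length B) \<le> length M"
proof -
  have "is_perm k [1..<Suc k]"
    unfolding is_perm_def by auto
  then obtain Bs where Bs: "is_solution k M [1..<Suc k] Bs" "\<forall>B \<in> set Bs. length B \<le> 1"
    using solution_one_bc_per_meeting[OF assms] by blast
  moreover have "length Bs = length M"
    using Bs(1) unfolding is_solution_def by simp
  ultimately show ?thesis
    using sum_list_length_le_length[OF Bs(2)] by (metis nth_mem)
qed

end
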